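(* Let $T\colon\mathscr C\to\mathscr C$ be a homeomorphism of the Cantor set with exactly one fixed point $x^0$ such that for every $x\ne x^0$ and every $m\in\mathbb N$ the set $\{T^{mk}(x):k\in\mathbb Z\}$ is dense in $\mathscr C$. Let $\mathscr C=A\sqcup B$ be a partition into clopen sets with $x^0\in A$. Let $\hat X=A\times\{0,1\}\sqcup B\times\{0\}$ and define $f\colon\hat X\to\hat X$ by $f(x,i)=(T(x),1)$ if $i=0$ and $T(x)\in A$, and $f(x,i)=(T(x),0)$ otherwise. For $x\in\mathscr C$ let $N(x,B)=\min\{k\in\mathbb N_0: T^{-k}(x)\in B\}$ (with $N(x,B)=\infty$ if no such $k$ exists), let $U=\{x\in\mathscr C: N(x,B)<\infty\}$, and let $X=\overline{\{(x,N(x,B)\bmod 2):x\in U\}}$ (closure in $\hat X$). Then for every $m\in\mathbb N$, $X$ is the least closed subset of $\hat X$ that contains $B\times\{0\}$ and is $f^m$-invariant (i.e. satisfies $f^m(S)\subseteq S$).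
   Context: $\mathscr C$ denotes the Cantor set; $\mathbb N_0=\{0,1,2,\dots\}$. *)

theory Defs
  imports "HOL-Analysis.Analysis"
begin

definition cantor_set :: "real set" where
  "cantor_set = {(\<Sum>n. (if d n then 2 else 0) / 3 ^ Suc n) | d :: nat \<Rightarrow> bool. True}"

definition zpow :: "(real \<Rightarrow> real) \<Rightarrow> (real \<Rightarrow> real) \<Rightarrow> int \<Rightarrow> real \<Rightarrow> real" where
  "zpow T Tinv k = (if 0 \<le> k then T ^^ nat k else Tinv ^^ nat (- k))"

definition Xhat :: "real set \<Rightarrow> real set \<Rightarrow> (real \<times> nat) set" where
  "Xhat A B = A \<times> {0, 1} \<union> B \<times> {0}"

definition fmap :: "(real \<Rightarrow> real) \<Rightarrow> real set \<Rightarrow> real \<times> nat \<Rightarrow> real \<times> nat" where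
  "fmap T A = (\<lambda>(x, i). if i = 0 \<and> T x \<in> A then (T x, 1) else (T x, 0))"

text \<open>U = {x : N(x,B) < infinity}; on U, N(x,B) is the least k with T^{-k} x in B.\<close>
definition Uset :: "(real \<Rightarrow> real) \<Rightarrow> real set \<Rightarrow> real set" where
  "Uset Tinv B = {x \<in> cantor_set. \<exists>k::nat. (Tinv ^^ k) x \<in> B}"

definition NB :: "(real \<Rightarrow> real) \<Rightarrow> real set \<Rightarrow> real \<Rightarrow> nat" where
  "NB Tinv B x = (LEAST k::nat. (Tinv ^^ k) x \<in> B)"

definition Xset :: "(real \<Rightarrow> real) \<Rightarrow> real set \<Rightarrow> real set \<Rightarrow> (real \<times> nat) set" where
  "Xset Tinv A B = (top_of_set (Xhat A B)) closure_of
     {(x, NB Tinv B x mod 2) | x. x \<in> Uset Tinv B}"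

end

theory Submission
  imports Defs
begin

(* Fix m and write g = T^m. The forward g-orbit of the nonempty clopen set B is dense: the closure F
   of this orbit is closed, forward invariant and has nonempty interior, and if some point v other
   than the fixed point lay outside F, its forward orbit would eventually stay in F and its backward
   orbit would stay outside F, so by compactness and the density of all other orbits both halves
   of its orbit would converge to the fixed point; then v would be isolated in the closure of its
   orbit, i.e. in the perfect Cantor set.
   The parity of N(x,B) is locally constant on U and f(x, N(x,B) mod 2) = (T x, N(T x,B) mod 2).
   Hence a closed f^m-invariant set containing B x {0} contains the graph points over the dense
   forward g-orbit of B, and by local constancy all graph points, hence X; conversely X has these
   properties because f is continuous on hat X. *)

section \<open>The Cantor set\<close>

definition cantor_point :: "(nat \<Rightarrow> bool) \<Rightarrow> real" where
  "cantor_point d = (\<Sum>n. (if d n then 2 else 0) / 3 ^ Suc n)"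

lemma cantor_set_eq_range: "cantor_set = range cantor_point"
  unfolding cantor_set_def cantor_point_def by auto

lemma summable_two_over_powers_of_three: "summable (\<lambda>n. 2 / (3::real) ^ Suc n)"
proof -
  have "summable (\<lambda>n. 2/3 * (1/3::real) ^ n)"
    by (intro summable_mult summable_geometric) auto
  then show ?thesis
    by (simp add: power_divide field_simps)
qed

lemma summable_cantor_digits: "summable (\<lambda>n. (if d n then 2 else 0) / (3::real) ^ Suc n)"
  by (rule summable_comparison_test[OF _ summable_two_over_powers_of_three]) auto

lemma continuous_on_cantor_point: "continuous_on UNIV cantor_point"
proof -
  have ul: "uniform_limit UNIV (\<lambda>n d. \<Sum>i<n. (if d i then 2 else 0) / (3::real) ^ Suc i)
      cantor_point sequentially"
    unfolding cantor_point_def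
    by (rule Weierstrass_m_test[OF _ summable_two_over_powers_of_three]) auto
  have digit: "continuous_on UNIV (\<lambda>d::nat \<Rightarrow> bool. (if d i then 2 else 0) / (3::real) ^ Suc i)"
    for i
    using continuous_on_compose[OF continuous_on_product_coordinates[of i],
        of "\<lambda>b::bool. (if b then 2 else 0) / (3::real) ^ Suc i"]
    by (simp add: o_def)
  have "continuous_on UNIV (\<lambda>d. \<Sum>i<n. (if d i then 2 else 0) / (3::real) ^ Suc i)" for n
    by (intro continuous_on_sum digit)
  then show ?thesis
    by (intro uniform_limit_theorem[OF _ ul]) auto
qed

lemma compact_cantor_set: "compact cantor_set"
proof -
  have "compact_space (product_topology (\<lambda>i::nat. (euclidean :: bool topology)) UNIV)"
    by (subst compact_space_product_topology) (simp add: compact_space_def finite_imp_compact)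
  then have "compact (UNIV :: (nat \<Rightarrow> bool) set)"
    by (simp add: euclidean_product_topology compact_space_def)
  then show ?thesis
    unfolding cantor_set_eq_range
    using compact_continuous_image continuous_on_cantor_point by blast
qed

lemma cantor_point_flip_digit:
  "\<bar>cantor_point (d(n := \<not> d n)) - cantor_point d\<bar> = 2 / 3 ^ Suc n"
proof -
  let ?a = "\<lambda>d k. (if d k then 2 else 0) / (3::real) ^ Suc k"
  let ?d' = "d(n := \<not> d n)"
  have "(\<lambda>k. ?a ?d' k - ?a d k) = (\<lambda>k. if k = n then ?a ?d' n - ?a d n else 0)"
    by auto
  then have "(\<lambda>k. ?a ?d' k - ?a d k) sums (?a ?d' n - ?a d n)"
    using sums_single[of n "\<lambda>_. ?a ?d' n - ?a d n"] by simp
  moreover have "(\<lambda>k. ?a ?d' k - ?a d k) sums (cantor_point ?d' - cantor_point d)"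
    unfolding cantor_point_def by (intro sums_diff summable_sums summable_cantor_digits)
  ultimately have "cantor_point ?d' - cantor_point d = ?a ?d' n - ?a d n"
    using sums_unique2 by blast
  then show ?thesis
    by auto
qed

lemma cantor_set_islimpt: "x \<in> cantor_set \<Longrightarrow> x islimpt cantor_set"
proof (unfold islimpt_approachable, intro allI impI)
  fix e :: real
  assume "x \<in> cantor_set" "e > 0"
  then obtain d where x: "x = cantor_point d"
    by (auto simp: cantor_set_eq_range)
  obtain n where n: "(1/3::real) ^ n < e"
    using real_arch_pow_inv[of e "1/3"] \<open>e > 0\<close> by auto
  have "(2::real) / 3 ^ Suc n = 2/3 * (1/3) ^ n"
    by (simp add: power_divide)
  also have "\<dots> < e"
    using n zero_le_power[of "1/3::real" n] by linarith
  finally show "\<exists>w\<in>cantor_set. w \<noteq> x \<and> dist w x < e"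
    using cantor_point_flip_digit[of d n] x
    by (intro bexI[of _ "cantor_point (d(n := \<not> d n))"])
       (auto simp: dist_real_def cantor_set_eq_range)
qed

section \<open>Homeomorphisms whose orbits are dense off one point\<close>

definition bi_orbit :: "('a \<Rightarrow> 'a) \<Rightarrow> ('a \<Rightarrow> 'a) \<Rightarrow> 'a \<Rightarrow> 'a set" where
  "bi_orbit g g' x = range (\<lambda>j. (g ^^ j) x) \<union> range (\<lambda>j. (g' ^^ j) x)"

lemma bi_orbit_commute: "bi_orbit g g' x = bi_orbit g' g x"
  unfolding bi_orbit_def by auto

lemma funpow_in_invariant: "f ` S \<subseteq> S \<Longrightarrow> x \<in> S \<Longrightarrow> (f ^^ n) x \<in> S"
  by (induction n) auto

lemma continuous_map_funpow: "continuous_map X X f \<Longrightarrow> continuous_map X X (f ^^ n)"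
  by (induction n) (auto intro: continuous_map_compose)

lemma homeomorphism_funpow:
  assumes "homeomorphism S S f g"
  shows "homeomorphism S S (f ^^ n) (g ^^ n)"
proof (induction n)
  case 0
  then show ?case
    using homeomorphism_ident[of S] by (simp add: id_def)
next
  case (Suc n)
  have "f ^^ Suc n = f \<circ> f ^^ n" "g ^^ Suc n = g ^^ n \<circ> g"
    by (simp, rule funpow_Suc_right)
  then show ?case
    using homeomorphism_compose[OF Suc assms] by (simp only:)
qed

lemma homeomorphism_funpow_in1: "homeomorphism S S f g \<Longrightarrow> x \<in> S \<Longrightarrow> (f ^^ n) x \<in> S"
  using homeomorphism_image1[OF homeomorphism_funpow] by blast

lemma homeomorphism_funpow_in2: "homeomorphism S S f g \<Longrightarrow> x \<in> S \<Longrightarrow> (g ^^ n) x \<in> S"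
  using homeomorphism_image2[OF homeomorphism_funpow] by blast

lemma homeomorphism_funpow_diff:
  assumes "homeomorphism S S f g" "x \<in> S" "k \<le> j"
  shows "(g ^^ k) ((f ^^ j) x) = (f ^^ (j - k)) x"
proof -
  have "(f ^^ j) x = (f ^^ k) ((f ^^ (j - k)) x)"
    using assms(3) by (metis funpow_add le_add_diff_inverse o_apply)
  moreover have "(f ^^ (j - k)) x \<in> S"
    using homeomorphism_funpow_in1[OF assms(1,2)] .
  ultimately show ?thesis
    using homeomorphism_apply1[OF homeomorphism_funpow[OF assms(1)]] by simp
qed

locale almost_minimal_homeomorphism =
  fixes C :: "'a::metric_space set" and g g' :: "'a \<Rightarrow> 'a" and x0 :: 'a
  assumes homeo: "homeomorphism C C g g'"
    and compact_C: "compact C"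
    and perfect: "\<And>x. x \<in> C \<Longrightarrow> x islimpt C"
    and dense_bi_orbit: "\<And>x. x \<in> C \<Longrightarrow> x \<noteq> x0 \<Longrightarrow> C \<subseteq> closure (bi_orbit g g' x)"
begin

lemma inverse: "almost_minimal_homeomorphism C g' g x0"
  using homeomorphism_symD[OF homeo] compact_C perfect dense_bi_orbit
  by unfold_locales (auto simp: bi_orbit_commute)

lemma limit_point_bi_orbit_subset:
  assumes v: "v \<in> C" and K: "closed K" and in_K: "\<And>j. j \<ge> J \<Longrightarrow> (g ^^ j) v \<in> K"
    and \<rho>: "filterlim \<rho> sequentially sequentially"
    and lim: "(\<lambda>i. (g ^^ \<rho> i) v) \<longlonglongrightarrow> l" and l: "l \<in> C"
  shows "bi_orbit g g' l \<subseteq> K"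
proof -
  have limit_in_K: "h l \<in> K"
    if "continuous_on C h" "\<forall>\<^sub>F i in sequentially. h ((g ^^ \<rho> i) v) \<in> K" for h
    using Lim_in_closed_set[OF K that(2) sequentially_bot
        continuous_on_tendsto_compose[OF that(1) lim l always_eventually]]
      homeomorphism_funpow_in1[OF homeo v] by blast
  have large: "\<forall>\<^sub>F i in sequentially. n \<le> \<rho> i" for n
    using \<rho> by (simp add: filterlim_at_top)
  have "(g ^^ k) l \<in> K" for k
  proof (rule limit_in_K)
    show "continuous_on C (g ^^ k)"
      using homeomorphism_cont1[OF homeomorphism_funpow[OF homeo]] .
    show "\<forall>\<^sub>F i in sequentially. (g ^^ k) ((g ^^ \<rho> i) v) \<in> K"
      using large[of J]
    proof eventually_elim
      case (elim i)
      then show ?case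
        using in_K[of "k + \<rho> i"] by (simp add: funpow_add)
    qed
  qed
  moreover have "(g' ^^ k) l \<in> K" for k
  proof (rule limit_in_K)
    show "continuous_on C (g' ^^ k)"
      using homeomorphism_cont2[OF homeomorphism_funpow[OF homeo]] .
    show "\<forall>\<^sub>F i in sequentially. (g' ^^ k) ((g ^^ \<rho> i) v) \<in> K"
      using large[of "J + k"]
    proof eventually_elim
      case (elim i)
      then show ?case
        using in_K[of "\<rho> i - k"] homeomorphism_funpow_diff[OF homeo v, of k "\<rho> i"] by simp
    qed
  qed
  ultimately show ?thesis
    unfolding bi_orbit_def by auto
qed

lemma tendsto_x0_if_eventually_in_closed:
  assumes v: "v \<in> C" and K: "closed K" "y \<in> C" "y \<notin> K"
    and in_K: "\<And>j. j \<ge> J \<Longrightarrow> (g ^^ j) v \<in> K"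
  shows "(\<lambda>j. (g ^^ j) v) \<longlonglongrightarrow> x0"
proof (rule ccontr)
  assume "\<not> (\<lambda>j. (g ^^ j) v) \<longlonglongrightarrow> x0"
  then obtain e where "e > 0" and "frequently (\<lambda>j. e \<le> dist ((g ^^ j) v) x0) sequentially"
    unfolding tendsto_iff by (auto simp: not_eventually not_less)
  then have "infinite {j. e \<le> dist ((g ^^ j) v) x0}"
    by (simp add: frequently_cofinite[symmetric] cofinite_eq_sequentially)
  then obtain \<phi> :: "nat \<Rightarrow> nat" where \<phi>: "strict_mono \<phi>" "\<And>i. e \<le> dist ((g ^^ \<phi> i) v) x0"
    using infinite_enumerate by blast
  have "\<forall>i. (g ^^ \<phi> i) v \<in> C"
    using homeomorphism_funpow_in1[OF homeo v] by blast
  then obtain l r where l: "l \<in> C" and r: "strict_mono r"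
    and lim: "((\<lambda>i. (g ^^ \<phi> i) v) \<circ> r) \<longlonglongrightarrow> l"
    by (rule seq_compactE[OF compact_imp_seq_compact[OF compact_C]])
  have "e \<le> dist l x0"
    by (rule tendsto_lowerbound[OF tendsto_dist[OF lim tendsto_const]]) (simp_all add: \<phi>(2))
  with \<open>e > 0\<close> have "l \<noteq> x0"
    by auto
  have "(\<lambda>i. (g ^^ (\<phi> \<circ> r) i) v) \<longlonglongrightarrow> l"
    using lim by (simp add: o_def)
  then have "bi_orbit g g' l \<subseteq> K"
    using limit_point_bi_orbit_subset[OF v K(1) in_K filterlim_subseq[OF strict_mono_o[OF \<phi>(1) r]] _ l]
    by blast
  then have "C \<subseteq> K"
    using dense_bi_orbit[OF l \<open>l \<noteq> x0\<close>] closure_minimal[OF _ K(1)] by blast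
  with K show False
    by blast
qed

text \<open>Such a point would be isolated in the closure of its orbit, which is all of the perfect
  set \<open>C\<close>.\<close>
lemma not_tendsto_both_directions:
  assumes v: "v \<in> C" "v \<noteq> x0"
    and forward: "(\<lambda>j. (g ^^ j) v) \<longlonglongrightarrow> x0" and backward: "(\<lambda>j. (g' ^^ j) v) \<longlonglongrightarrow> x0"
  shows False
proof -
  define \<epsilon> where "\<epsilon> = dist v x0 / 2"
  have "\<epsilon> > 0"
    using v by (simp add: \<epsilon>_def)
  then have "\<forall>\<^sub>F j in sequentially. dist ((g ^^ j) v) x0 < \<epsilon> \<and> dist ((g' ^^ j) v) x0 < \<epsilon>"
    using forward backward by (auto simp: tendsto_iff intro: eventually_conj)
  then obtain M where M: "\<And>j. j \<ge> M \<Longrightarrow> dist ((g ^^ j) v) x0 < \<epsilon> \<and> dist ((g' ^^ j) v) x0 < \<epsilon>"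
    unfolding eventually_sequentially by blast
  define Q where "Q = (\<lambda>j. (g ^^ j) v) ` {..<M} \<union> (\<lambda>j. (g' ^^ j) v) ` {..<M} - {v} \<union> cball x0 \<epsilon>"
  have "closed Q"
    unfolding Q_def by (intro closed_Un finite_imp_closed closed_cball) auto
  have "v \<notin> Q"
    using \<open>\<epsilon> > 0\<close> by (simp add: Q_def \<epsilon>_def dist_commute)
  have "bi_orbit g g' v \<subseteq> insert v Q"
  proof
    fix y
    assume "y \<in> bi_orbit g g' v"
    then obtain j where "y = (g ^^ j) v \<or> y = (g' ^^ j) v"
      unfolding bi_orbit_def by auto
    then show "y \<in> insert v Q"
      using M[of j] by (cases "j < M") (auto simp: Q_def dist_commute less_imp_le)
  qed
  then have "closure (bi_orbit g g' v) \<subseteq> insert v Q"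
    using \<open>closed Q\<close> by (intro closure_minimal) auto
  then have "C \<subseteq> insert v Q"
    using dense_bi_orbit[OF v] by blast
  then have "v islimpt Q"
    using perfect[OF v(1)] islimpt_subset islimpt_insert by blast
  then show False
    using \<open>closed Q\<close> \<open>v \<notin> Q\<close> closed_limpt by blast
qed


lemma outside_point_neq_x0:
  assumes "closed F" "\<not> C \<subseteq> F"
  obtains v where "v \<in> C" "v \<notin> F" "v \<noteq> x0"
proof -
  obtain z where z: "z \<in> C" "z \<notin> F"
    using assms(2) by blast
  then obtain w where "w \<in> C" "w \<in> - F" "w \<noteq> z"
    using perfect[OF z(1)] assms(1) unfolding islimpt_def by (metis ComplI open_Compl)
  then show thesis
    using that z by (cases "z = x0") auto
qed

text \<open>Forward orbits of points outside \<open>F\<close> eventually enter \<open>F\<close> and stay there, while backward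
  orbits never enter \<open>F\<close>; so both converge to \<open>x0\<close>, which is impossible.\<close>
lemma closed_forward_invariant_eq:
  assumes F: "closed F" "F \<subseteq> C" "g ` F \<subseteq> F"
    and B: "openin (top_of_set C) B" "B \<noteq> {}" "B \<subseteq> F"
  shows "F = C"
proof (rule ccontr)
  assume "F \<noteq> C"
  then obtain v where v: "v \<in> C" "v \<notin> F" "v \<noteq> x0"
    using outside_point_neq_x0[OF F(1)] F(2) by blast
  have backward_outside: "(g' ^^ j) v \<in> C - F" for j
  proof -
    have "(g ^^ j) ((g' ^^ j) v) = v"
      using homeomorphism_apply2[OF homeomorphism_funpow[OF homeo] v(1)] .
    then have "(g' ^^ j) v \<notin> F"
      using funpow_in_invariant[OF F(3)] v(2) by metis
    then show ?thesis
      using homeomorphism_funpow_in2[OF homeo v(1)] by blast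
  qed
  obtain Bo where Bo: "open Bo" "B = C \<inter> Bo"
    using B(1) by (auto simp: openin_open)
  obtain b where b: "b \<in> B"
    using B(2) by blast
  have "b \<in> closure (bi_orbit g g' v)"
    using dense_bi_orbit[OF v(1,3)] b Bo(2) by blast
  then have "Bo \<inter> bi_orbit g g' v \<noteq> {}"
    using open_Int_closure_eq_empty[OF Bo(1)] b Bo(2) by blast
  then obtain y where y: "y \<in> Bo" "y \<in> bi_orbit g g' v"
    by blast
  have "y \<in> C"
    using y(2) homeomorphism_funpow_in1[OF homeo v(1)] homeomorphism_funpow_in2[OF homeo v(1)]
    unfolding bi_orbit_def by blast
  then have "y \<in> F"
    using y(1) Bo(2) B(3) by blast
  then obtain k where "(g ^^ k) v \<in> F"
    using y(2) backward_outside unfolding bi_orbit_def by blast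
  then have forward_inside: "(g ^^ j) v \<in> F" if "k \<le> j" for j
  proof -
    have "(g ^^ j) v = (g ^^ (j - k)) ((g ^^ k) v)"
      using that by (metis funpow_add le_add_diff_inverse2 o_apply)
    then show ?thesis
      using funpow_in_invariant[OF F(3) \<open>(g ^^ k) v \<in> F\<close>] by simp
  qed
  have "Bo \<inter> (C - F) = {}"
    using Bo(2) B(3) by blast
  then have "b \<notin> closure (C - F)"
    using open_Int_closure_eq_empty[OF Bo(1)] b Bo(2) by blast
  have "(\<lambda>j. (g ^^ j) v) \<longlonglongrightarrow> x0"
    using tendsto_x0_if_eventually_in_closed[OF v(1) F(1) v(1,2) forward_inside] .
  moreover have "(\<lambda>j. (g' ^^ j) v) \<longlonglongrightarrow> x0"
    using almost_minimal_homeomorphism.tendsto_x0_if_eventually_in_closed[OF inverse v(1) closed_closure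
        _ \<open>b \<notin> closure (C - F)\<close>] backward_outside closure_subset b Bo(2) by blast
  ultimately show False
    using not_tendsto_both_directions[OF v(1,3)] by blast
qed

lemma forward_orbit_dense:
  assumes "openin (top_of_set C) B" "B \<noteq> {}"
  shows "C \<subseteq> closure (\<Union>k. (g ^^ k) ` B)"
proof -
  let ?F = "closure (\<Union>k. (g ^^ k) ` B)"
  have "B \<subseteq> C"
    using openin_imp_subset[OF assms(1)] by simp
  then have "?F \<subseteq> C"
    using homeomorphism_funpow_in1[OF homeo] compact_imp_closed[OF compact_C]
    by (intro closure_minimal) auto
  moreover have "g ` ?F \<subseteq> ?F"
  proof (rule image_closure_subset)
    show "continuous_on ?F g"
      using continuous_on_subset[OF homeomorphism_cont1[OF homeo] \<open>?F \<subseteq> C\<close>] .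
    have "g ((g ^^ k) b) \<in> (\<Union>k. (g ^^ k) ` B)" if "b \<in> B" for k b
      using that by (intro UN_I[of "Suc k"]) auto
    then show "g ` (\<Union>k. (g ^^ k) ` B) \<subseteq> ?F"
      using closure_subset by blast
  qed simp
  moreover have "B \<subseteq> ?F"
    using closure_subset[of "\<Union>k. (g ^^ k) ` B"] UN_upper[of 0 UNIV "\<lambda>k. (g ^^ k) ` B"] by simp
  ultimately show ?thesis
    using closed_forward_invariant_eq[OF closed_closure _ _ assms] by blast
qed

end

section \<open>The skew product over a clopen partition\<close>

definition nb_graph :: "(real \<Rightarrow> real) \<Rightarrow> real set \<Rightarrow> (real \<times> nat) set" where
  "nb_graph Tinv B = {(x, NB Tinv B x mod 2) | x. x \<in> Uset Tinv B}"

lemma Xset_eq_closure_of_nb_graph: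
  "Xset Tinv A B = top_of_set (Xhat A B) closure_of nb_graph Tinv B"
  unfolding Xset_def nb_graph_def ..

lemma zpow_mult_in_bi_orbit:
  assumes "m \<ge> 1"
  shows "zpow T Tinv (int m * k) x \<in> bi_orbit (T ^^ m) (Tinv ^^ m) x"
proof (cases "0 \<le> k")
  case True
  then have "zpow T Tinv (int m * k) x = ((T ^^ m) ^^ nat k) x"
    by (simp add: zpow_def funpow_mult nat_mult_distrib)
  then show ?thesis
    unfolding bi_orbit_def by auto
next
  case False
  have "nat (- (int m * k)) = m * nat (- k)"
    by (simp add: nat_mult_distrib flip: mult_minus_right)
  moreover have "\<not> 0 \<le> int m * k"
    using False assms by (simp add: zero_le_mult_iff)
  ultimately have "zpow T Tinv (int m * k) x = ((Tinv ^^ m) ^^ nat (- k)) x"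
    by (simp add: zpow_def funpow_mult)
  then show ?thesis
    unfolding bi_orbit_def by auto
qed

locale cantor_clopen_partition =
  fixes T Tinv :: "real \<Rightarrow> real" and A B :: "real set"
  assumes homeo: "homeomorphism cantor_set cantor_set T Tinv"
    and partition: "A \<union> B = cantor_set" "A \<inter> B = {}"
    and open_A: "openin (top_of_set cantor_set) A"
    and closed_A: "closedin (top_of_set cantor_set) A"
    and open_B: "openin (top_of_set cantor_set) B"
begin

lemma closed_B: "closedin (top_of_set cantor_set) B"
proof -
  have "cantor_set - B = A"
    using partition by blast
  then show ?thesis
    using open_A partition by (simp add: closedin_def) blast
qed

lemma T_in: "x \<in> cantor_set \<Longrightarrow> T x \<in> cantor_set"
  using homeomorphism_image1[OF homeo] by blast

lemma T_in_A_or_B: "x \<in> A \<union> B \<Longrightarrow> T x \<in> A \<or> T x \<in> B"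
  using T_in partition(1) by blast

lemma Tinv_funpow_Suc_T: "x \<in> cantor_set \<Longrightarrow> (Tinv ^^ Suc n) (T x) = (Tinv ^^ n) x"
  using homeomorphism_apply1[OF homeo] by (simp add: funpow_Suc_right del: funpow.simps)

lemma NB_in_B: "x \<in> Uset Tinv B \<Longrightarrow> (Tinv ^^ NB Tinv B x) x \<in> B"
  unfolding Uset_def NB_def by (auto intro: LeastI_ex)

lemma in_A_before_NB:
  assumes "x \<in> Uset Tinv B" "j < NB Tinv B x"
  shows "(Tinv ^^ j) x \<in> A"
proof -
  have "(Tinv ^^ j) x \<notin> B"
    using not_less_Least[of j "\<lambda>k. (Tinv ^^ k) x \<in> B"] assms(2) unfolding NB_def by blast
  moreover have "(Tinv ^^ j) x \<in> cantor_set"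
    using homeomorphism_funpow_in2[OF homeo] assms(1) by (auto simp: Uset_def)
  ultimately show ?thesis
    using partition by blast
qed

lemma NB_eqI:
  assumes "x \<in> cantor_set" "(Tinv ^^ n) x \<in> B" "\<And>j. j < n \<Longrightarrow> (Tinv ^^ j) x \<in> A"
  shows "x \<in> Uset Tinv B" "NB Tinv B x = n"
proof -
  show "x \<in> Uset Tinv B"
    using assms(1,2) by (auto simp: Uset_def)
  show "NB Tinv B x = n"
    unfolding NB_def
  proof (rule Least_equality)
    fix j
    assume "(Tinv ^^ j) x \<in> B"
    then show "n \<le> j"
      using assms(3)[of j] partition(2) by (meson disjoint_iff not_le)
  qed (rule assms(2))
qed

lemma NB_B:
  assumes "b \<in> B"
  shows "b \<in> Uset Tinv B" "NB Tinv B b = 0"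
  using NB_eqI[of b 0] assms partition(1) by auto

lemma NB_T:
  assumes "x \<in> Uset Tinv B"
  shows "T x \<in> Uset Tinv B \<and> NB Tinv B (T x) = (if T x \<in> B then 0 else Suc (NB Tinv B x))"
proof (cases "T x \<in> B")
  case True
  then show ?thesis
    using NB_B by simp
next
  case False
  have x: "x \<in> cantor_set"
    using assms by (simp add: Uset_def)
  then have "T x \<in> A"
    using T_in False partition(1) by blast
  then have in_A: "(Tinv ^^ j) (T x) \<in> A" if "j < Suc (NB Tinv B x)" for j
    using that in_A_before_NB[OF assms] Tinv_funpow_Suc_T[OF x] by (cases j) auto
  have in_B: "(Tinv ^^ Suc (NB Tinv B x)) (T x) \<in> B"
    using NB_in_B[OF assms] Tinv_funpow_Suc_T[OF x] by simp
  show ?thesis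
    using NB_eqI[OF T_in[OF x] in_B in_A] False by simp
qed

lemma fmap_nb_graph_point:
  assumes "x \<in> Uset Tinv B"
  shows "fmap T A (x, NB Tinv B x mod 2) = (T x, NB Tinv B (T x) mod 2)"
  using NB_T[OF assms] partition by (auto simp: fmap_def mod_Suc Uset_def)

lemma funpow_fmap_nb_graph_point:
  assumes "x \<in> Uset Tinv B"
  shows "(fmap T A ^^ j) (x, NB Tinv B x mod 2) = ((T ^^ j) x, NB Tinv B ((T ^^ j) x) mod 2)
    \<and> (T ^^ j) x \<in> Uset Tinv B"
proof (induction j)
  case (Suc j)
  then show ?case
    using fmap_nb_graph_point NB_T by simp
qed (use assms in simp)

lemma funpow_fmap_nb_graph: "(fmap T A ^^ j) ` nb_graph Tinv B \<subseteq> nb_graph Tinv B"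
  using funpow_fmap_nb_graph_point unfolding nb_graph_def by fastforce

lemma B_times_0_subset_nb_graph: "B \<times> {0} \<subseteq> nb_graph Tinv B"
  using NB_B unfolding nb_graph_def by force

lemma nb_graph_subset_Xhat: "nb_graph Tinv B \<subseteq> Xhat A B"
proof
  fix p
  assume "p \<in> nb_graph Tinv B"
  then obtain x where p: "p = (x, NB Tinv B x mod 2)" "x \<in> Uset Tinv B"
    unfolding nb_graph_def by blast
  then have "x \<in> A \<or> x \<in> B"
    using partition(1) by (auto simp: Uset_def)
  then show "p \<in> Xhat A B"
    using p NB_B(2) by (auto simp: Xhat_def)
qed

lemma fmap_Xhat: "fmap T A ` Xhat A B \<subseteq> Xhat A B"
proof
  fix q
  assume "q \<in> fmap T A ` Xhat A B"
  then obtain x i where "(x, i) \<in> Xhat A B" "q = fmap T A (x, i)"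
    by auto
  moreover from this have "T x \<in> A \<or> T x \<in> B"
    using T_in_A_or_B partition(1) by (auto simp: Xhat_def)
  ultimately show "q \<in> Xhat A B"
    by (auto simp: fmap_def Xhat_def)
qed

text \<open>The second coordinate of \<open>fmap\<close> is locally constant on \<open>Xhat\<close>, since \<open>A\<close> and \<open>T -` A\<close> are
  clopen in the Cantor set.\<close>
lemma continuous_on_fmap: "continuous_on (Xhat A B) (fmap T A)"
proof -
  have closed_cantor: "closed cantor_set"
    using compact_imp_closed[OF compact_cantor_set] .
  have contT: "continuous_on cantor_set T" and TC: "T \<in> cantor_set \<rightarrow> cantor_set"
    using homeomorphism_cont1[OF homeo] homeomorphism_image1[OF homeo] by auto
  define S1 where "S1 = (cantor_set \<inter> T -` A) \<times> {0::nat}"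
  define S2 where "S2 = (cantor_set \<inter> T -` B) \<times> {0::nat} \<union> A \<times> {1}"
  have "closed S1"
    unfolding S1_def using closedin_closed_trans[OF continuous_closedin_preimage_gen[OF contT TC closed_A]
        closed_cantor] by (intro closed_Times) auto
  have "closed S2"
    unfolding S2_def using closedin_closed_trans[OF continuous_closedin_preimage_gen[OF contT TC closed_B]
        closed_cantor] closedin_closed_trans[OF closed_A closed_cantor]
    by (intro closed_Un closed_Times) auto
  have "Xhat A B = S1 \<union> S2"
    using partition(2) T_in_A_or_B unfolding S1_def S2_def Xhat_def partition(1)[symmetric] by auto
  have contTfst: "continuous_on (S1 \<union> S2) (\<lambda>p. T (fst p))"
    using partition
    by (intro continuous_on_compose2[OF contT] continuous_intros) (auto simp: S1_def S2_def)
  have fmap_eq: "fmap T A = (\<lambda>p. if snd p = 0 \<and> T (fst p) \<in> A then (T (fst p), 1) else (T (fst p), 0))"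
    by (auto simp: fmap_def fun_eq_iff)
  show ?thesis
    unfolding \<open>Xhat A B = S1 \<union> S2\<close> fmap_eq
  proof (rule continuous_on_cases_local)
    show "closedin (top_of_set (S1 \<union> S2)) S1" "closedin (top_of_set (S1 \<union> S2)) S2"
      using \<open>closed S1\<close> \<open>closed S2\<close> by (auto intro: closed_subset)
    show "continuous_on S1 (\<lambda>p. (T (fst p), 1::nat))" "continuous_on S2 (\<lambda>p. (T (fst p), 0::nat))"
      by (auto intro!: continuous_on_Pair continuous_on_const continuous_on_subset[OF contTfst])
    fix p
    assume "p \<in> S1 \<and> \<not> (snd p = 0 \<and> T (fst p) \<in> A) \<or> p \<in> S2 \<and> snd p = 0 \<and> T (fst p) \<in> A"
    then show "(T (fst p), 1::nat) = (T (fst p), 0)"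
      using partition(2) by (auto simp: S1_def S2_def)
  qed
qed

lemma continuous_map_fmap:
  "continuous_map (top_of_set (Xhat A B)) (top_of_set (Xhat A B)) (fmap T A)"
  using continuous_on_fmap fmap_Xhat
  by (simp add: continuous_map_in_subtopology image_subset_iff_funcset)

lemma openin_NB_level_set: "openin (top_of_set cantor_set) {x \<in> Uset Tinv B. NB Tinv B x = n}"
proof -
  define W where "W j = (if j < n then A else B)" for j
  have "{x \<in> Uset Tinv B. NB Tinv B x = n} = (\<Inter>j\<in>{..n}. cantor_set \<inter> (Tinv ^^ j) -` W j)"
  proof (intro equalityI subsetI)
    fix x
    assume "x \<in> {x \<in> Uset Tinv B. NB Tinv B x = n}"
    then show "x \<in> (\<Inter>j\<in>{..n}. cantor_set \<inter> (Tinv ^^ j) -` W j)"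
      using NB_in_B[of x] in_A_before_NB[of x] by (auto simp: W_def Uset_def)
  next
    fix x
    assume "x \<in> (\<Inter>j\<in>{..n}. cantor_set \<inter> (Tinv ^^ j) -` W j)"
    then have x: "x \<in> cantor_set" and W: "\<And>j. j \<le> n \<Longrightarrow> (Tinv ^^ j) x \<in> W j"
      by auto
    have "(Tinv ^^ n) x \<in> B"
      using W[of n] by (simp add: W_def)
    moreover have "(Tinv ^^ j) x \<in> A" if "j < n" for j
      using W[of j] that by (simp add: W_def)
    ultimately show "x \<in> {x \<in> Uset Tinv B. NB Tinv B x = n}"
      using NB_eqI[OF x] by blast
  qed
  moreover have "openin (top_of_set cantor_set) (cantor_set \<inter> (Tinv ^^ j) -` W j)" for j
    using continuous_openin_preimage[OF homeomorphism_cont2[OF homeomorphism_funpow[OF homeo]], of j]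
      homeomorphism_funpow_in2[OF homeo] open_A open_B unfolding W_def by auto
  ultimately show ?thesis
    by (simp only:) (rule openin_INT2, auto)
qed

lemma nb_graph_subset_closed_invariant:
  assumes dense: "B \<noteq> {} \<Longrightarrow> cantor_set \<subseteq> closure (\<Union>k. ((T ^^ m) ^^ k) ` B)"
    and S: "closedin (top_of_set (Xhat A B)) S" "B \<times> {0} \<subseteq> S" "(fmap T A ^^ m) ` S \<subseteq> S"
  shows "nb_graph Tinv B \<subseteq> S"
proof
  fix p
  assume "p \<in> nb_graph Tinv B"
  then obtain z where p: "p = (z, NB Tinv B z mod 2)" and z: "z \<in> Uset Tinv B"
    unfolding nb_graph_def by blast
  let ?G = "\<Union>k. ((T ^^ m) ^^ k) ` B"
  have G_in_S: "(w, NB Tinv B w mod 2) \<in> S" if w_G: "w \<in> ?G" for w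
  proof -
    obtain k b where b: "b \<in> B" and w: "w = (T ^^ (m * k)) b"
      using w_G by (auto simp: funpow_mult)
    have "((fmap T A ^^ m) ^^ k) (b, 0) \<in> S"
      using funpow_in_invariant[OF S(3)] S(2) b by blast
    then show ?thesis
      using funpow_fmap_nb_graph_point[OF NB_B(1)[OF b], of "m * k"] NB_B(2)[OF b] w
      by (simp add: funpow_mult)
  qed
  have G_subset: "?G \<subseteq> cantor_set"
    using homeomorphism_funpow_in1[OF homeo] partition(1) by (auto simp: funpow_mult)
  obtain L where L: "open L" "{x \<in> Uset Tinv B. NB Tinv B x = NB Tinv B z} = cantor_set \<inter> L"
    using openin_NB_level_set[of "NB Tinv B z"] by (auto simp: openin_open)
  obtain S0 where S0: "closed S0" "S = Xhat A B \<inter> S0"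
    using S(1) by (auto simp: closedin_closed)
  have "z \<in> closure ?G"
    using dense NB_in_B[OF z] z by (auto simp: Uset_def)
  then have "z \<in> closure (L \<inter> ?G)"
    using open_Int_closure_subset[OF L(1)] L(2) z by blast
  moreover have "L \<inter> ?G \<subseteq> {w. (w, NB Tinv B z mod 2) \<in> S0}"
  proof
    fix w
    assume w: "w \<in> L \<inter> ?G"
    then have "NB Tinv B w = NB Tinv B z"
      using L(2) G_subset by blast
    then show "w \<in> {w. (w, NB Tinv B z mod 2) \<in> S0}"
      using G_in_S[of w] w S0(2) by auto
  qed
  moreover have "closed {w. (w, NB Tinv B z mod 2) \<in> S0}"
    using continuous_closed_vimage[OF S0(1), of "\<lambda>w. (w, NB Tinv B z mod 2)"]
    by (simp add: vimage_def)
  ultimately have "p \<in> S0"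
    using p closure_minimal by blast
  then show "p \<in> S"
    using S0(2) nb_graph_subset_Xhat \<open>p \<in> nb_graph Tinv B\<close> by blast
qed

lemma Xset_least_closed_invariant:
  assumes "B \<noteq> {} \<Longrightarrow> cantor_set \<subseteq> closure (\<Union>k. ((T ^^ m) ^^ k) ` B)"
  shows "closedin (top_of_set (Xhat A B)) (Xset Tinv A B)
       \<and> B \<times> {0} \<subseteq> Xset Tinv A B
       \<and> (fmap T A ^^ m) ` Xset Tinv A B \<subseteq> Xset Tinv A B
       \<and> (\<forall>S. closedin (top_of_set (Xhat A B)) S \<and> B \<times> {0} \<subseteq> S
              \<and> (fmap T A ^^ m) ` S \<subseteq> S \<longrightarrow> Xset Tinv A B \<subseteq> S)"
  unfolding Xset_eq_closure_of_nb_graph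
proof (intro conjI allI impI)
  let ?X = "top_of_set (Xhat A B)"
  show "closedin ?X (?X closure_of nb_graph Tinv B)"
    by simp
  show "B \<times> {0} \<subseteq> ?X closure_of nb_graph Tinv B"
    using closure_of_subset[of "nb_graph Tinv B" ?X] nb_graph_subset_Xhat B_times_0_subset_nb_graph
    by auto
  show "(fmap T A ^^ m) ` (?X closure_of nb_graph Tinv B) \<subseteq> ?X closure_of nb_graph Tinv B"
    using continuous_map_image_closure_subset[OF continuous_map_funpow[OF continuous_map_fmap]]
      closure_of_mono[OF funpow_fmap_nb_graph] by (meson order_trans)
  fix S
  assume "closedin ?X S \<and> B \<times> {0} \<subseteq> S \<and> (fmap T A ^^ m) ` S \<subseteq> S"
  then show "?X closure_of nb_graph Tinv B \<subseteq> S"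
    using closure_of_minimal nb_graph_subset_closed_invariant[OF assms] by blast
qed

end

theorem lemma7p1:
  fixes T Tinv :: "real \<Rightarrow> real" and x0 :: real and A B :: "real set"
  assumes homeo: "homeomorphism cantor_set cantor_set T Tinv"
    and fix0: "x0 \<in> cantor_set" "T x0 = x0"
    and unique_fix: "\<forall>x\<in>cantor_set. T x = x \<longrightarrow> x = x0"
    and dense: "\<forall>x\<in>cantor_set. x \<noteq> x0 \<longrightarrow> (\<forall>m::nat. m \<ge> 1 \<longrightarrow>
        cantor_set \<subseteq> closure {zpow T Tinv (int m * k) x | k :: int. True})"
    and part: "A \<union> B = cantor_set" "A \<inter> B = {}"
    and clopenA: "openin (top_of_set cantor_set) A" "closedin (top_of_set cantor_set) A"
    and clopenB: "openin (top_of_set cantor_set) B" "closedin (top_of_set cantor_set) B"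
    and x0A: "x0 \<in> A"
  shows "\<forall>m::nat. m \<ge> 1 \<longrightarrow>
      (closedin (top_of_set (Xhat A B)) (Xset Tinv A B)
       \<and> B \<times> {0} \<subseteq> Xset Tinv A B
       \<and> (fmap T A ^^ m) ` Xset Tinv A B \<subseteq> Xset Tinv A B
       \<and> (\<forall>S. closedin (top_of_set (Xhat A B)) S \<and> B \<times> {0} \<subseteq> S
              \<and> (fmap T A ^^ m) ` S \<subseteq> S \<longrightarrow> Xset Tinv A B \<subseteq> S))"
proof (intro allI impI)
  fix m :: nat
  assume "m \<ge> 1"
  interpret partition: cantor_clopen_partition T Tinv A B
    using homeo part clopenA clopenB(1) by unfold_locales
  interpret almost_minimal_homeomorphism cantor_set "T ^^ m" "Tinv ^^ m" x0
  proof
    show "homeomorphism cantor_set cantor_set (T ^^ m) (Tinv ^^ m)"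
      using homeomorphism_funpow[OF homeo] .
    show "compact cantor_set" "\<And>x. x \<in> cantor_set \<Longrightarrow> x islimpt cantor_set"
      using compact_cantor_set cantor_set_islimpt by auto
    fix x
    assume "x \<in> cantor_set" "x \<noteq> x0"
    then have "cantor_set \<subseteq> closure {zpow T Tinv (int m * k) x | k :: int. True}"
      using dense \<open>m \<ge> 1\<close> by blast
    also have "\<dots> \<subseteq> closure (bi_orbit (T ^^ m) (Tinv ^^ m) x)"
      using zpow_mult_in_bi_orbit[OF \<open>m \<ge> 1\<close>] by (intro closure_mono) blast
    finally show "cantor_set \<subseteq> closure (bi_orbit (T ^^ m) (Tinv ^^ m) x)" .
  qed
  show "closedin (top_of_set (Xhat A B)) (Xset Tinv A B)
       \<and> B \<times> {0} \<subseteq> Xset Tinv A B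
       \<and> (fmap T A ^^ m) ` Xset Tinv A B \<subseteq> Xset Tinv A B
       \<and> (\<forall>S. closedin (top_of_set (Xhat A B)) S \<and> B \<times> {0} \<subseteq> S
              \<and> (fmap T A ^^ m) ` S \<subseteq> S \<longrightarrow> Xset Tinv A B \<subseteq> S)"
    using partition.Xset_least_closed_invariant forward_orbit_dense[OF clopenB(1)] by blast
qed

end
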